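(* Let $n \ge 1$, let $Q \ge 0$, and let $q_1,\dots,q_n \in [0,Q]$ be demands. Let $d_{i,i+1}$ ($1 \le i \le n-1$), $d_{0,i}$ and $d_{i,0}$ ($1 \le i \le n$) be real numbers. For $1 \le i \le n$ put $D[i] = \sum_{k=1}^{i-1} d_{k,k+1}$ and $Q[i] = \sum_{k=1}^{i} q_k$, with $Q[0]=0$. Let $\mathcal{G}=(\mathcal{V},\mathcal{A})$ be the directed acyclic graph with $\mathcal{V}=\{0,1,\dots,n\}$ and with an arc $(i,j)$, for $0 \le i<j\le n$, if and only if $Q[j]-Q[i] \le Q$; the arc $(i,j)$ has cost $c(i,j) = d_{0,i+1} + D[j] - D[i+1] + d_{j,0}$. Then there is an algorithm that computes a minimum-cost path from $0$ to $n$ in $\mathcal{G}$ (together with its cost) in $\mathcal{O}(n)$ time.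
   Context: This is the "Split" problem of route-first cluster-second heuristics for the capacitated vehicle routing problem: customers $1,\dots,n$ are given in a fixed order (a "giant tour"), $d_{0,i}$ and $d_{i,0}$ are the distances from the depot to customer $i$ and back, $d_{i,i+1}$ is the distance between consecutive customers, and an arc $(i,j)$ represents a route leaving the depot, visiting customers $i+1,\dots,j$ in order and returning to the depot, which is allowed only if its total demand is at most the vehicle capacity $Q$. A path from $0$ to $n$ thus corresponds to a partition of the giant tour into consecutive feasible routes, and its cost is the total routing cost. Running time is measured in the model where arithmetic operations and comparisons on reals take constant time. *)

theory Defs
  imports Complex_Main
begin

text \<open>Input data: n customers, capacity Q, demands q i (1 \<le> i \<le> n),
 dd i = d_{i,i+1} (1 \<le> i \<le> n-1), dO i = d_{0,i}, dB i = d_{i,0} (1 \<le> i \<le> n).\<close>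

definition Dpre :: "(nat \<Rightarrow> real) \<Rightarrow> nat \<Rightarrow> real" where
  "Dpre dd i = (\<Sum>k = 1..<i. dd k)"

definition Qpre :: "(nat \<Rightarrow> real) \<Rightarrow> nat \<Rightarrow> real" where
  "Qpre q i = (\<Sum>k = 1..i. q k)"

definition split_arc :: "nat \<Rightarrow> real \<Rightarrow> (nat \<Rightarrow> real) \<Rightarrow> nat \<Rightarrow> nat \<Rightarrow> bool" where
  "split_arc n Q q i j \<longleftrightarrow> i < j \<and> j \<le> n \<and> Qpre q j - Qpre q i \<le> Q"

definition arc_cost :: "(nat \<Rightarrow> real) \<Rightarrow> (nat \<Rightarrow> real) \<Rightarrow> (nat \<Rightarrow> real) \<Rightarrow> nat \<Rightarrow> nat \<Rightarrow> real" where
  "arc_cost dd dO dB i j = dO (i+1) + Dpre dd j - Dpre dd (Suc i) + dB j"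

definition is_split_path :: "nat \<Rightarrow> real \<Rightarrow> (nat \<Rightarrow> real) \<Rightarrow> nat list \<Rightarrow> bool" where
  "is_split_path n Q q vs \<longleftrightarrow> vs \<noteq> [] \<and> hd vs = 0 \<and> last vs = n \<and>
     (\<forall>k. Suc k < length vs \<longrightarrow> split_arc n Q q (vs ! k) (vs ! Suc k))"

definition path_cost :: "(nat \<Rightarrow> real) \<Rightarrow> (nat \<Rightarrow> real) \<Rightarrow> (nat \<Rightarrow> real) \<Rightarrow> nat list \<Rightarrow> real" where
  "path_cost dd dO dB vs = (\<Sum>k < length vs - 1. arc_cost dd dO dB (vs ! k) (vs ! Suc k))"

definition min_split_path ::
  "nat \<Rightarrow> real \<Rightarrow> (nat \<Rightarrow> real) \<Rightarrow> (nat \<Rightarrow> real) \<Rightarrow> (nat \<Rightarrow> real) \<Rightarrow> (nat \<Rightarrow> real) \<Rightarrow> nat list \<Rightarrow> bool" where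
  "min_split_path n Q q dd dO dB vs \<longleftrightarrow> is_split_path n Q q vs \<and>
     (\<forall>ws. is_split_path n Q q ws \<longrightarrow> path_cost dd dO dB vs \<le> path_cost dd dO dB ws)"

text \<open>Every instruction costs one step.
 Indirect addressing requires the address cell to hold an integer value (otherwise the
 machine is stuck, i.e. never halts).\<close>

datatype instr =
    LoadC int int
  | Copy int int
  | Add int int int
  | Sub int int int
  | Mul int int int
  | Load int int
  | Store int int
  | JumpLe int int nat
  | Halt

type_synonym mstate = "nat \<times> (int \<Rightarrow> real)"

fun exec_instr :: "instr \<Rightarrow> nat \<Rightarrow> (int \<Rightarrow> real) \<Rightarrow> mstate" where
  "exec_instr (LoadC r c) pc m = (Suc pc, m(r := of_int c))"
| "exec_instr (Copy r a) pc m = (Suc pc, m(r := m a))"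
| "exec_instr (Add r a b) pc m = (Suc pc, m(r := m a + m b))"
| "exec_instr (Sub r a b) pc m = (Suc pc, m(r := m a - m b))"
| "exec_instr (Mul r a b) pc m = (Suc pc, m(r := m a * m b))"
| "exec_instr (Load r a) pc m =
     (if m a \<in> \<int> then (Suc pc, m(r := m \<lfloor>m a\<rfloor>)) else (pc, m))"
| "exec_instr (Store a b) pc m =
     (if m a \<in> \<int> then (Suc pc, m(\<lfloor>m a\<rfloor> := m b)) else (pc, m))"
| "exec_instr (JumpLe a b t) pc m = (if m a \<le> m b then (t, m) else (Suc pc, m))"
| "exec_instr Halt pc m = (pc, m)"

definition mstep :: "instr list \<Rightarrow> mstate \<Rightarrow> mstate" where
  "mstep P s = (if fst s < length P then exec_instr (P ! fst s) (fst s) (snd s) else s)"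

definition halted :: "instr list \<Rightarrow> mstate \<Rightarrow> bool" where
  "halted P s \<longleftrightarrow> fst s \<ge> length P \<or> P ! fst s = Halt"

definition runs_in :: "instr list \<Rightarrow> (int \<Rightarrow> real) \<Rightarrow> nat \<Rightarrow> (int \<Rightarrow> real) \<Rightarrow> bool" where
  "runs_in P m t m' \<longleftrightarrow> halted P ((mstep P ^^ t) (0, m)) \<and>
     (\<forall>t' < t. \<not> halted P ((mstep P ^^ t') (0, m))) \<and> snd ((mstep P ^^ t) (0, m)) = m'"

text \<open>Input encoding: cell 0 = n, cell 1 = Q; for 1 \<le> i \<le> n the cells 10+4i .. 13+4i
 hold q_i, d_{i,i+1} (0 if i = n), d_{0,i}, d_{i,0}. All other cells are 0.\<close>
definition init_mem ::
  "nat \<Rightarrow> real \<Rightarrow> (nat \<Rightarrow> real) \<Rightarrow> (nat \<Rightarrow> real) \<Rightarrow> (nat \<Rightarrow> real) \<Rightarrow> (nat \<Rightarrow> real) \<Rightarrow> int \<Rightarrow> real" where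
  "init_mem n Q q dd dO dB a =
     (if a = 0 then real n else if a = 1 then Q
      else if a \<ge> 14 \<and> nat ((a - 10) div 4) \<le> n then
        (let i = nat ((a - 10) div 4); r = (a - 10) mod 4 in
          if r = 0 then q i else if r = 1 then (if i < n then dd i else 0)
          else if r = 2 then dO i else dB i)
      else 0)"

text \<open>Output convention: cell 2 = cost, cell 3 = number of vertices L of the path,
 cell -(k+1) = k-th vertex of the path (k < L).\<close>
definition output_ok ::
  "nat \<Rightarrow> real \<Rightarrow> (nat \<Rightarrow> real) \<Rightarrow> (nat \<Rightarrow> real) \<Rightarrow> (nat \<Rightarrow> real) \<Rightarrow> (nat \<Rightarrow> real) \<Rightarrow> (int \<Rightarrow> real) \<Rightarrow> bool" where
  "output_ok n Q q dd dO dB m \<longleftrightarrow> (\<exists>vs. min_split_path n Q q dd dO dB vs \<and>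
      m 2 = path_cost dd dO dB vs \<and> m 3 = real (length vs) \<and>
      (\<forall>k < length vs. m (- (int k + 1)) = real (vs ! k)))"

end

theory Submission
  imports Defs
begin

text \<open>Let pot j be the cost of a cheapest path from 0 to j. Since
  c(i,j) = (d_{0,i+1} - D[i+1]) + (D[j] + d_{j,0}), Bellman's equation reads
  pot j = D[j] + d_{j,0} + min {restart i | (i,j) is an arc} with restart i = pot i + d_{0,i+1} - D[i+1],
  and as Q[.] is nondecreasing, the predecessors admissible for j form a window that only slides to
  the right as j grows. Its minimum is kept at the front of a deque whose indices increase and whose
  restart values do not decrease: predecessors that became infeasible leave at the front, and before
  j is appended at the back every entry with a larger restart value leaves, being dominated by j from
  now on. Every index enters and leaves the deque at most once, so all labels are computed in linear
  time; following the predecessor stored with each label from n back to 0 yields an optimal path.\<close>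

section \<open>Paths and potentials\<close>

lemma Qpre_0 [simp]: "Qpre q 0 = 0"
  by (simp add: Qpre_def)

lemma Qpre_Suc: "Qpre q (Suc i) = Qpre q i + q (Suc i)"
  by (simp add: Qpre_def)

lemma Dpre_Suc: "1 \<le> j \<Longrightarrow> Dpre dd (Suc j) = Dpre dd j + dd j"
  by (simp add: Dpre_def)

definition split_walk :: "nat \<Rightarrow> real \<Rightarrow> (nat \<Rightarrow> real) \<Rightarrow> nat list \<Rightarrow> bool" where
  "split_walk n Q q vs \<longleftrightarrow> (\<forall>k. Suc k < length vs \<longrightarrow> split_arc n Q q (vs ! k) (vs ! Suc k))"

lemma is_split_path_iff:
  "is_split_path n Q q vs \<longleftrightarrow> vs \<noteq> [] \<and> hd vs = 0 \<and> last vs = n \<and> split_walk n Q q vs"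
  by (simp add: is_split_path_def split_walk_def)

lemma split_walk_singleton [simp]: "split_walk n Q q [x]"
  by (simp add: split_walk_def)

lemma split_walk_Cons_Cons:
  "split_walk n Q q (x # y # vs) \<longleftrightarrow> split_arc n Q q x y \<and> split_walk n Q q (y # vs)"
  unfolding split_walk_def by (auto simp: less_Suc_eq_0_disj)

lemma path_cost_singleton [simp]: "path_cost dd dO dB [x] = 0"
  by (simp add: path_cost_def)

lemma path_cost_Cons_Cons:
  "path_cost dd dO dB (x # y # vs) = arc_cost dd dO dB x y + path_cost dd dO dB (y # vs)"
  unfolding path_cost_def by (simp add: sum.lessThan_Suc_shift del: sum.lessThan_Suc)

lemma path_cost_snoc:
  assumes "vs \<noteq> []"
  shows "path_cost dd dO dB (vs @ [y]) = path_cost dd dO dB vs + arc_cost dd dO dB (last vs) y"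
proof -
  obtain l where l: "length vs = Suc l" using assms by (cases vs) auto
  have "(\<Sum>k<l. arc_cost dd dO dB ((vs @ [y]) ! k) ((vs @ [y]) ! Suc k))
      = (\<Sum>k<l. arc_cost dd dO dB (vs ! k) (vs ! Suc k))"
    by (rule sum.cong) (auto simp: nth_append l)
  then show ?thesis
    using l assms by (simp add: path_cost_def nth_append last_conv_nth)
qed

lemma split_walk_snoc:
  assumes "vs \<noteq> []" "split_walk n Q q vs" "split_arc n Q q (last vs) y"
  shows "split_walk n Q q (vs @ [y])"
  unfolding split_walk_def
proof (intro allI impI)
  fix k assume k: "Suc k < length (vs @ [y])"
  show "split_arc n Q q ((vs @ [y]) ! k) ((vs @ [y]) ! Suc k)"
  proof (cases "Suc k < length vs")
    case True
    then show ?thesis using assms(2) by (simp add: split_walk_def nth_append)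
  next
    case False
    then have "k = length vs - 1" "Suc k = length vs" using k by auto
    then show ?thesis using assms(1,3) by (simp add: nth_append last_conv_nth)
  qed
qed

lemma path_cost_ge_potential_diff:
  assumes feasible: "\<And>i k. split_arc n Q q i k \<Longrightarrow> V k \<le> V i + arc_cost dd dO dB i k"
  shows "vs \<noteq> [] \<Longrightarrow> split_walk n Q q vs \<Longrightarrow> V (last vs) - V (hd vs) \<le> path_cost dd dO dB vs"
proof (induction vs rule: induct_list012)
  case (3 x y vs)
  then have "split_arc n Q q x y" "split_walk n Q q (y # vs)" by (simp_all add: split_walk_Cons_Cons)
  then show ?case using "3.IH"(2) feasible[of x y] by (simp add: path_cost_Cons_Cons)
qed auto

fun pred_chain :: "(nat \<Rightarrow> nat) \<Rightarrow> nat \<Rightarrow> nat list" where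
  "pred_chain pr x = (if x = 0 \<or> x \<le> pr x then [x] else x # pred_chain pr (pr x))"

declare pred_chain.simps [simp del]

lemma pred_chain_0 [simp]: "pred_chain pr 0 = [0]"
  by (simp add: pred_chain.simps)

lemma pred_chain_step: "x \<noteq> 0 \<Longrightarrow> pr x < x \<Longrightarrow> pred_chain pr x = x # pred_chain pr (pr x)"
  by (subst pred_chain.simps) auto

lemma pred_chain_ne [simp]: "pred_chain pr x \<noteq> []"
  by (subst pred_chain.simps) auto

context
  fixes n Q q dd dO dB and V :: "nat \<Rightarrow> real" and pr :: "nat \<Rightarrow> nat"
  assumes V_0: "V 0 = 0"
    and pred: "\<And>i. 1 \<le> i \<Longrightarrow> i \<le> n \<Longrightarrow>
      pr i < i \<and> split_arc n Q q (pr i) i \<and> V i = V (pr i) + arc_cost dd dO dB (pr i) i"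
begin

lemma split_walk_pred_chain:
  "x \<le> n \<Longrightarrow> hd (rev (pred_chain pr x)) = 0 \<and> last (rev (pred_chain pr x)) = x \<and>
     split_walk n Q q (rev (pred_chain pr x)) \<and> path_cost dd dO dB (rev (pred_chain pr x)) = V x"
proof (induction x rule: less_induct)
  case (less x)
  show ?case
  proof (cases "x = 0")
    case True
    then show ?thesis using V_0 by simp
  next
    case False
    then have p: "pr x < x" "split_arc n Q q (pr x) x" "V x = V (pr x) + arc_cost dd dO dB (pr x) x"
      using pred less.prems by auto
    have "rev (pred_chain pr x) = rev (pred_chain pr (pr x)) @ [x]"
      using pred_chain_step[where pr=pr, OF False p(1)] by simp
    then show ?thesis
      using less.IH[OF p(1)] p less.prems by (simp add: path_cost_snoc split_walk_snoc)
  qed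
qed

lemma min_split_path_pred_chain:
  assumes feasible: "\<And>i k. split_arc n Q q i k \<Longrightarrow> V k \<le> V i + arc_cost dd dO dB i k"
  shows "min_split_path n Q q dd dO dB (rev (pred_chain pr n)) \<and>
    path_cost dd dO dB (rev (pred_chain pr n)) = V n"
proof -
  note chain = split_walk_pred_chain[OF order_refl]
  have "path_cost dd dO dB (rev (pred_chain pr n)) \<le> path_cost dd dO dB ws"
    if "is_split_path n Q q ws" for ws
    using that path_cost_ge_potential_diff[OF feasible, where vs=ws] chain V_0
    by (auto simp: is_split_path_iff)
  then show ?thesis
    using chain by (simp add: min_split_path_def is_split_path_iff)
qed

end

section \<open>Monotone deques\<close>

definition deque_sorted :: "(nat \<Rightarrow> 'a::linorder) \<Rightarrow> (nat \<Rightarrow> nat) \<Rightarrow> nat \<Rightarrow> nat \<Rightarrow> bool" where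
  "deque_sorted f e h t \<longleftrightarrow> (\<forall>p p'. h \<le> p \<longrightarrow> p < p' \<longrightarrow> p' < t \<longrightarrow> e p < e p' \<and> f (e p) \<le> f (e p'))"

definition deque_dominates ::
  "(nat \<Rightarrow> 'a::linorder) \<Rightarrow> (nat \<Rightarrow> nat) \<Rightarrow> nat \<Rightarrow> nat \<Rightarrow> nat set \<Rightarrow> bool" where
  "deque_dominates f e h t S \<longleftrightarrow> (\<forall>i\<in>S. \<exists>p. h \<le> p \<and> p < t \<and> i \<le> e p \<and> f (e p) \<le> f i)"

lemma deque_sorted_drop_front: "deque_sorted f e h t \<Longrightarrow> h \<le> h' \<Longrightarrow> deque_sorted f e h' t"
  by (simp add: deque_sorted_def)

lemma deque_dominates_subset: "deque_dominates f e h t S \<Longrightarrow> S' \<subseteq> S \<Longrightarrow> deque_dominates f e h t S'"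
  by (auto simp: deque_dominates_def)

lemma deque_head_le:
  assumes "deque_sorted f e h t" "deque_dominates f e h t S" "i \<in> S"
  shows "f (e h) \<le> f i"
proof -
  obtain p where p: "h \<le> p" "p < t" "f (e p) \<le> f i"
    using assms(2,3) by (auto simp: deque_dominates_def)
  then have "f (e h) \<le> f (e p)"
    using assms(1) by (cases "p = h") (auto simp: deque_sorted_def)
  with p(3) show ?thesis by simp
qed

text \<open>A dropped entry cannot witness an element of S: witnesses pass W by upward.\<close>
lemma deque_dominates_drop_front:
  assumes dom: "deque_dominates f e h t S"
    and dropped: "\<And>p. h \<le> p \<Longrightarrow> p < h' \<Longrightarrow> \<not> W (e p)"
    and upward: "\<And>i p. i \<in> S \<Longrightarrow> h \<le> p \<Longrightarrow> p < t \<Longrightarrow> i \<le> e p \<Longrightarrow> W (e p)"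
  shows "deque_dominates f e h' t S"
  unfolding deque_dominates_def
proof
  fix i assume i: "i \<in> S"
  then obtain p where p: "h \<le> p" "p < t" "i \<le> e p" "f (e p) \<le> f i"
    using dom by (auto simp: deque_dominates_def)
  then have "h' \<le> p" using dropped upward[OF i] by (meson not_le)
  with p show "\<exists>p. h' \<le> p \<and> p < t \<and> i \<le> e p \<and> f (e p) \<le> f i" by blast
qed

lemma deque_sorted_push_back:
  assumes sorted: "deque_sorted f e h t" and "t' \<le> t" and last: "t' = h \<or> f (e (t' - 1)) \<le> f j"
    and below: "\<And>p. h \<le> p \<Longrightarrow> p < t \<Longrightarrow> e p < j"
  shows "deque_sorted f (e(t' := j)) h (Suc t')"
  unfolding deque_sorted_def
proof (intro allI impI)
  fix p p' assume pp: "h \<le> p" "p < p'" "p' < Suc t'"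
  show "(e(t' := j)) p < (e(t' := j)) p' \<and> f ((e(t' := j)) p) \<le> f ((e(t' := j)) p')"
  proof (cases "p' = t'")
    case True
    have "f (e p) \<le> f (e (t' - 1))"
      using sorted pp True \<open>t' \<le> t\<close> by (cases "p = t' - 1") (auto simp: deque_sorted_def)
    then show ?thesis using True pp \<open>t' \<le> t\<close> last below[of p] by auto
  next
    case False
    then show ?thesis using sorted pp \<open>t' \<le> t\<close> by (auto simp: deque_sorted_def)
  qed
qed

text \<open>Elements witnessed by a dropped back entry are witnessed by j instead: j exceeds every
  entry and its value is smaller.\<close>
lemma deque_dominates_push_back:
  assumes dom: "deque_dominates f e h t S" and "h \<le> t'"
    and dropped: "\<And>p. t' \<le> p \<Longrightarrow> p < t \<Longrightarrow> f j < f (e p)"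
    and below: "\<And>p. h \<le> p \<Longrightarrow> p < t \<Longrightarrow> e p < j"
  shows "deque_dominates f (e(t' := j)) h (Suc t') (insert j S)"
  unfolding deque_dominates_def
proof
  fix i assume "i \<in> insert j S"
  then consider "i = j" | "i \<in> S" by blast
  then show "\<exists>p. h \<le> p \<and> p < Suc t' \<and> i \<le> (e(t' := j)) p \<and> f ((e(t' := j)) p) \<le> f i"
  proof cases
    case 1
    then show ?thesis using \<open>h \<le> t'\<close> by (intro exI[of _ t']) auto
  next
    case 2
    then obtain p where p: "h \<le> p" "p < t" "i \<le> e p" "f (e p) \<le> f i"
      using dom by (auto simp: deque_dominates_def)
    show ?thesis
    proof (cases "p < t'")
      case True
      then show ?thesis using p by (intro exI[of _ p]) auto
    next
      case False
      then have "f j \<le> f i" "i \<le> j" using p dropped[of p] below[of p] by auto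
      then show ?thesis using \<open>h \<le> t'\<close> by (intro exI[of _ t']) auto
    qed
  qed
qed

section \<open>The program\<close>

definition run :: "instr list \<Rightarrow> mstate \<Rightarrow> nat \<Rightarrow> mstate \<Rightarrow> bool" where
  "run P s t s' \<longleftrightarrow> (mstep P ^^ t) s = s' \<and> (\<forall>t'<t. \<not> halted P ((mstep P ^^ t') s))"

lemma run_0 [simp]: "run P s 0 s' \<longleftrightarrow> s' = s"
  by (auto simp: run_def)

lemma run_Suc: "run P s (Suc t) s' \<longleftrightarrow> \<not> halted P s \<and> run P (mstep P s) t s'"
  by (auto simp: run_def All_less_Suc2 funpow_Suc_right simp del: funpow.simps)

lemma run_trans: "run P s t1 s1 \<Longrightarrow> run P s1 t2 s2 \<Longrightarrow> run P s (t1 + t2) s2"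
  by (induction t1 arbitrary: s) (auto simp: run_Suc)

lemma run_numeral:
  "run P (pc, m) (numeral k) s' \<longleftrightarrow>
     pc < length P \<and> P ! pc \<noteq> Halt \<and> run P (exec_instr (P ! pc) pc m) (pred_numeral k) s'"
  by (simp add: numeral_eq_Suc run_Suc halted_def mstep_def)

lemma run_Suc_0:
  "run P (pc, m) (Suc 0) s' \<longleftrightarrow> pc < length P \<and> P ! pc \<noteq> Halt \<and> s' = exec_instr (P ! pc) pc m"
  unfolding run_Suc by (auto simp: halted_def mstep_def run_def)

lemma runs_in_if_run: "run P (0, m) t (pc, m') \<Longrightarrow> halted P (pc, m') \<Longrightarrow> runs_in P m t m'"
  unfolding run_def runs_in_def by auto

text \<open>Cells 0 and 1 hold n and Q; the program keeps j in cell 2, D[j] in cell 3,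
  the head and tail positions h, t of the deque in cells 4 and 5, Q[j] in cell 6 and pot j in
  cell 8; cells 7 and 9 are scratch. The four input cells of customer i start at qcell i; once i
  is processed they hold Q[i], restart i, a predecessor of i and pot i, and the cells 10-13 play
  this role for the depot. Deque position p is stored in cell -1-p, and the final path overwrites
  the cells -1, -2, ...\<close>

abbreviation qcell :: "nat \<Rightarrow> int" where "qcell i \<equiv> 4 * int i + 10"
abbreviation fcell :: "nat \<Rightarrow> int" where "fcell i \<equiv> 4 * int i + 11"
abbreviation pcell :: "nat \<Rightarrow> int" where "pcell i \<equiv> 4 * int i + 12"
abbreviation vcell :: "nat \<Rightarrow> int" where "vcell i \<equiv> 4 * int i + 13"
abbreviation slot :: "nat \<Rightarrow> int" where "slot p \<equiv> - 1 - int p"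

definition prog :: "instr list" where
 "prog = [
  \<comment> \<open>0: restart 0 := d_{0,1}; the deque is [0]; j := 1\<close>
  Copy 11 16, LoadC 5 1, LoadC 2 1,
  \<comment> \<open>3: Q[j] := Q[j-1] + q j\<close>
  LoadC 8 4, Mul 7 8 2, LoadC 8 10, Add 7 7 8, Load 8 7, Add 6 6 8, Store 7 6,
  \<comment> \<open>10: pop the front while its arc to j exceeds the capacity\<close>
  LoadC 9 (-1), Sub 9 9 4, Load 8 9, LoadC 9 4, Mul 8 9 8, LoadC 9 10, Add 8 8 9, Load 8 8,
  Sub 8 6 8, JumpLe 8 1 23, LoadC 9 1, Add 4 4 9, JumpLe 0 0 10,
  \<comment> \<open>23: predecessor and label of j; exit the main loop if j = n\<close>
  LoadC 9 (-1), Sub 9 9 4, Load 8 9, LoadC 9 2, Add 9 7 9, Store 9 8,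
  LoadC 9 4, Mul 8 9 8, LoadC 9 11, Add 8 8 9, Load 8 8,
  LoadC 9 3, Add 9 7 9, Load 9 9, Add 8 8 9, Add 8 8 3,
  LoadC 9 3, Add 9 7 9, Store 9 8,
  JumpLe 0 2 75,
  \<comment> \<open>43: D[j+1] and restart j\<close>
  LoadC 9 1, Add 9 7 9, Load 9 9, Add 3 3 9,
  LoadC 9 6, Add 9 7 9, Load 9 9, Add 8 8 9, Sub 8 8 3,
  LoadC 9 1, Add 9 7 9, Store 9 8,
  \<comment> \<open>55: pop the back while it is larger than restart j\<close>
  JumpLe 5 4 68, LoadC 9 0, Sub 9 9 5, Load 9 9, LoadC 7 4, Mul 9 7 9, LoadC 7 11, Add 9 9 7,
  Load 9 9, JumpLe 9 8 68, LoadC 9 1, Sub 5 5 9, JumpLe 0 0 55,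
  \<comment> \<open>68: push j, next j\<close>
  LoadC 9 (-1), Sub 9 9 5, Store 9 2, LoadC 9 1, Add 5 5 9, Add 2 2 9, JumpLe 0 0 3,
  \<comment> \<open>75: length of the predecessor chain of n\<close>
  LoadC 5 1, Copy 4 0,
  LoadC 9 0, JumpLe 4 9 87, LoadC 9 4, Mul 9 9 4, LoadC 7 12, Add 9 9 7, Load 4 9,
  LoadC 9 1, Add 5 5 9, JumpLe 0 0 77,
  \<comment> \<open>87: write the chain downwards from the cell -length\<close>
  Copy 4 0, LoadC 9 0, Sub 6 9 5,
  Store 6 4, LoadC 9 0, JumpLe 4 9 101, LoadC 9 4, Mul 9 9 4, LoadC 7 12, Add 9 9 7, Load 4 9,
  LoadC 9 1, Add 6 6 9, JumpLe 0 0 90,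
  \<comment> \<open>101: output\<close>
  Copy 2 8, Copy 3 5, Halt]"

lemmas prog_nth = prog_def[THEN arg_cong[where f = "\<lambda>P. P ! k" for k]]

lemma length_prog: "length prog = 104"
  by (simp add: prog_def)

lemma floor_numeral_mult_of_nat [simp]: "\<lfloor>numeral k * real j\<rfloor> = numeral k * int j"
  using floor_of_int[of "numeral k * int j"] by simp

lemma floor_minus_one_minus_of_nat [simp]: "\<lfloor>- 1 - real h\<rfloor> = - 1 - int h"
  using floor_of_int[of "- 1 - int h"] by simp

lemma minus_one_minus_of_nat_Ints [simp]: "- 1 - real h \<in> \<int>"
  by (simp add: Ints_diff)

lemma four_mult_neq_four_mult_plus_one [simp]:
  "4 * int a \<noteq> 1 + 4 * int b" "1 + 4 * int b \<noteq> 4 * int a"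
  by presburger+

lemmas run_prog = run_numeral run_Suc_0 prog_nth length_prog

lemma run_init: "run prog (0, m) 3 (3, m(11 := m 16, 5 := 1, 2 := 1))"
  by (simp add: run_prog)

lemma run_load_prefix:
  assumes "m 2 = real j" "m 6 = x" "m (qcell j) = y"
  shows "\<exists>m'. run prog (3,m) 7 (10, m') \<and> m' 6 = x + y \<and> m' (qcell j) = x + y \<and>
     m' 7 = 4 * real j + 10 \<and> (\<forall>a. a \<notin> {6,7,8,qcell j} \<longrightarrow> m' a = m a)"
  using assms by (simp add: run_prog)

lemma run_front_stop:
  assumes "m 4 = real h" "m (slot h) = real e" "m (qcell e) = g" "m 6 - g \<le> m 1"
  shows "\<exists>m'. run prog (10,m) 10 (23, m') \<and> (\<forall>a. a \<notin> {8,9} \<longrightarrow> m' a = m a)"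
  using assms by (simp add: run_prog)

lemma run_front_pop:
  assumes "m 4 = real h" "m (slot h) = real e" "m (qcell e) = g" "\<not> m 6 - g \<le> m 1"
  shows "\<exists>m'. run prog (10,m) 13 (10, m') \<and> m' 4 = real (Suc h) \<and> (\<forall>a. a \<notin> {4,8,9} \<longrightarrow> m' a = m a)"
  using assms by (simp add: run_prog)

lemma run_set_label:
  assumes "m 4 = real h" "m (slot h) = real e" "m 7 = 4 * real j + 10" "m (fcell e) = fe"
    "m (vcell j) = b" "m 3 = D" "m 2 = real j" "m 0 = real n"
  shows "\<exists>m'. run prog (23,m) 20 (if n \<le> j then 75 else 43, m') \<and> m' 8 = fe + b + D
     \<and> m' (pcell j) = real e \<and> m' (vcell j) = fe + b + D
     \<and> (\<forall>a. a \<notin> {8,9,pcell j,vcell j} \<longrightarrow> m' a = m a)"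
  using assms by (simp add: run_prog) (simp add: add.commute)

lemma run_set_restart:
  assumes "m 7 = 4 * real j + 10" "m (fcell j) = d" "m (pcell (Suc j)) = d0" "m 3 = D" "m 8 = V"
  shows "\<exists>m'. run prog (43,m) 12 (55, m') \<and> m' 3 = D + d \<and> m' 8 = V + d0 - (D + d)
     \<and> m' (fcell j) = V + d0 - (D + d) \<and> (\<forall>a. a \<notin> {3,8,9,fcell j} \<longrightarrow> m' a = m a)"
  using assms by (simp add: run_prog) (simp add: add.commute)

lemma run_back_empty:
  assumes "m 4 = real h" "m 5 = real t" "t \<le> h"
  shows "run prog (55,m) 1 (68, m)"
  using assms by (simp add: run_prog)

lemma run_back_stop:
  assumes "m 4 = real h" "m 5 = real (Suc t)" "h \<le> t" "m (slot t) = real e" "m (fcell e) = g" "g \<le> m 8"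
  shows "\<exists>m'. run prog (55,m) 10 (68, m') \<and> (\<forall>a. a \<notin> {7,9} \<longrightarrow> m' a = m a)"
  using assms by (simp add: run_prog)

lemma run_back_pop:
  assumes "m 4 = real h" "m 5 = real (Suc t)" "h \<le> t" "m (slot t) = real e" "m (fcell e) = g" "\<not> g \<le> m 8"
  shows "\<exists>m'. run prog (55,m) 13 (55, m') \<and> m' 5 = real t \<and> (\<forall>a. a \<notin> {5,7,9} \<longrightarrow> m' a = m a)"
  using assms by (simp add: run_prog)

lemma run_push:
  assumes "m 5 = real t" "m 2 = real j"
  shows "\<exists>m'. run prog (68,m) 7 (3, m') \<and> m' 5 = real (Suc t) \<and> m' 2 = real (Suc j) \<and>
     m' (slot t) = real j \<and> (\<forall>a. a \<notin> {2,5,9,slot t} \<longrightarrow> m' a = m a)"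
  using assms by (simp add: run_prog)

lemma run_count_init: "run prog (75,m) 2 (77, m(5 := 1, 4 := m 0))"
  by (simp add: run_prog)

lemma run_count_stop:
  assumes "m 4 = 0"
  shows "run prog (77,m) 2 (87, m(9 := 0))"
  using assms by (simp add: run_prog)

lemma run_count_step:
  assumes "m 4 = real x" "x \<noteq> 0" "m 5 = real L"
  shows "\<exists>m'. run prog (77,m) 10 (77, m') \<and> m' 4 = m (pcell x) \<and> m' 5 = real (Suc L) \<and>
    (\<forall>a. a \<notin> {4,5,7,9} \<longrightarrow> m' a = m a)"
  using assms by (simp add: run_prog)

lemma run_write_init: "run prog (87,m) 3 (90, m(4 := m 0, 9 := 0, 6 := - m 5))"
  by (simp add: run_prog)

lemma run_write_stop:
  assumes "m 4 = 0" "m 6 = real_of_int a"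
  shows "\<exists>m'. run prog (90,m) 3 (101, m') \<and> m' a = 0 \<and> (\<forall>b. b \<notin> {9,a} \<longrightarrow> m' b = m b)"
  using assms by (simp add: run_prog)

lemma run_write_step:
  assumes "m 4 = real x" "x \<noteq> 0" "m 6 = real_of_int a" "a < 0"
  shows "\<exists>m'. run prog (90,m) 11 (90, m') \<and> m' a = real x \<and> m' 4 = m (pcell x) \<and>
    m' 6 = real_of_int (a + 1) \<and> (\<forall>b. b \<notin> {4,6,7,9,a} \<longrightarrow> m' b = m b)"
  using assms by (simp add: run_prog)

lemma run_output: "run prog (101,m) 2 (103, m(2 := m 8, 3 := m 5))"
  by (simp add: run_prog)

lemma run_front_loop:
  assumes "m 4 = real h" "h < t"
    "\<forall>p. h \<le> p \<longrightarrow> p < t \<longrightarrow> m (slot p) = real (e p) \<and> m (qcell (e p)) = g p"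
    "\<exists>p. h \<le> p \<and> p < t \<and> m 6 - g p \<le> m 1"
  shows "\<exists>h' m'. h \<le> h' \<and> h' < t \<and> m 6 - g h' \<le> m 1 \<and> (\<forall>p. h \<le> p \<longrightarrow> p < h' \<longrightarrow> \<not> m 6 - g p \<le> m 1)
     \<and> run prog (10, m) (13 * (h' - h) + 10) (23, m') \<and> m' 4 = real h' \<and> (\<forall>a. a \<notin> {4,8,9} \<longrightarrow> m' a = m a)"
  using assms
proof (induction "t - h" arbitrary: h m)
  case 0
  then show ?case by simp
next
  case (Suc x)
  have h: "m (slot h) = real (e h)" "m (qcell (e h)) = g h" using Suc.prems(2,3) by auto
  show ?case
  proof (cases "m 6 - g h \<le> m 1")
    case True
    obtain m' where "run prog (10, m) 10 (23, m')" "\<forall>a. a \<notin> {8, 9} \<longrightarrow> m' a = m a"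
      using run_front_stop[OF Suc.prems(1) h True] by blast
    then show ?thesis using True Suc.prems(1,2) by (intro exI[of _ h] exI[of _ m']) auto
  next
    case False
    obtain m1 where m1: "run prog (10, m) 13 (10, m1)" "m1 4 = real (Suc h)"
      "\<forall>a. a \<notin> {4, 8, 9} \<longrightarrow> m1 a = m a"
      using run_front_pop[OF Suc.prems(1) h False] by blast
    then have same: "m1 6 = m 6" "m1 1 = m 1" by auto
    obtain p0 where "Suc h \<le> p0" "p0 < t" "m 6 - g p0 \<le> m 1"
      using Suc.prems(4) False by (metis Suc_leI le_neq_implies_less)
    then have x: "x = t - Suc h" and lt: "Suc h < t"
      and ex: "\<exists>p. Suc h \<le> p \<and> p < t \<and> m1 6 - g p \<le> m1 1"
      using Suc.hyps(2) same by auto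
    have "\<forall>p. Suc h \<le> p \<longrightarrow> p < t \<longrightarrow> m1 (slot p) = real (e p) \<and> m1 (qcell (e p)) = g p"
      using Suc.prems(3) m1(3) by auto
    from Suc.hyps(1)[OF x m1(2) lt this ex, unfolded same] obtain h' m' where
      IH: "Suc h \<le> h'" "h' < t" "m 6 - g h' \<le> m 1" "\<forall>p. Suc h \<le> p \<longrightarrow> p < h' \<longrightarrow> \<not> m 6 - g p \<le> m 1"
      "run prog (10, m1) (13 * (h' - Suc h) + 10) (23, m')" "m' 4 = real h'"
      "\<forall>a. a \<notin> {4, 8, 9} \<longrightarrow> m' a = m1 a"
      by blast
    have steps: "13 + (13 * (h' - Suc h) + 10) = 13 * (h' - h) + 10" using IH(1) by simp
    have "run prog (10, m) (13 * (h' - h) + 10) (23, m')"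
      using run_trans[OF m1(1) IH(5)] unfolding steps .
    moreover have "\<forall>p. h \<le> p \<longrightarrow> p < h' \<longrightarrow> \<not> m 6 - g p \<le> m 1"
      using IH(4) False by (metis Suc_leI le_neq_implies_less)
    ultimately show ?thesis
      using IH m1(3) by (intro exI[of _ h'] exI[of _ m']) auto
  qed
qed

lemma run_back_loop:
  assumes "m 4 = real h" "m 5 = real t" "h \<le> t"
    "\<forall>p. h \<le> p \<longrightarrow> p < t \<longrightarrow> m (slot p) = real (e p) \<and> m (fcell (e p)) = g p"
  shows "\<exists>t' m' T. h \<le> t' \<and> t' \<le> t \<and> (t' = h \<or> g (t' - 1) \<le> m 8) \<and> (\<forall>p. t' \<le> p \<longrightarrow> p < t \<longrightarrow> \<not> g p \<le> m 8)
     \<and> run prog (55, m) T (68, m') \<and> T \<le> 13 * (t - t') + 10 \<and> m' 5 = real t' \<and> (\<forall>a. a \<notin> {5,7,9} \<longrightarrow> m' a = m a)"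
  using assms
proof (induction t arbitrary: m)
  case 0
  then have "run prog (55, m) 1 (68, m)" using run_back_empty[of m h 0] by simp
  then show ?case using 0 by (intro exI[of _ 0] exI[of _ m] exI[of _ 1]) auto
next
  case (Suc t)
  show ?case
  proof (cases "h = Suc t")
    case True
    then have "run prog (55, m) 1 (68, m)" using run_back_empty[of m h "Suc t"] Suc.prems by simp
    then show ?thesis using True Suc.prems by (intro exI[of _ "Suc t"] exI[of _ m] exI[of _ 1]) auto
  next
    case False
    then have ht: "h < Suc t" "h \<le> t" using Suc.prems by auto
    have h1: "m (slot t) = real (e t)" "m (fcell (e t)) = g t"
      using Suc.prems(4) ht by auto
    show ?thesis
    proof (cases "g t \<le> m 8")
      case True
      from run_back_stop[OF Suc.prems(1,2) ht(2) h1 True] obtain m' where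
        "run prog (55, m) 10 (68, m')" "\<forall>a. a \<notin> {7, 9} \<longrightarrow> m' a = m a" by blast
      then show ?thesis using True Suc.prems ht
        by (intro exI[of _ "Suc t"] exI[of _ m'] exI[of _ 10]) auto
    next
      case False
      from run_back_pop[OF Suc.prems(1,2) ht(2) h1 False] obtain m1 where
        m1: "run prog (55, m) 13 (55, m1)" "m1 5 = real t" "\<forall>a. a \<notin> {5, 7, 9} \<longrightarrow> m1 a = m a" by auto
      have pr: "\<forall>p. h \<le> p \<longrightarrow> p < t \<longrightarrow> m1 (slot p) = real (e p) \<and> m1 (fcell (e p)) = g p"
        using Suc.prems(4) m1(3) by auto
      have m14: "m1 4 = real h" "m1 8 = m 8" using m1(3) Suc.prems(1) by auto
      from Suc.IH[OF m14(1) m1(2) ht(2) pr] obtain t' m' T where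
        IH: "h \<le> t'" "t' \<le> t" "t' = h \<or> g (t' - 1) \<le> m1 8" "\<forall>p. t' \<le> p \<longrightarrow> p < t \<longrightarrow> \<not> g p \<le> m1 8"
         "run prog (55, m1) T (68, m')" "T \<le> 13 * (t - t') + 10" "m' 5 = real t'"
         "\<forall>a. a \<notin> {5, 7, 9} \<longrightarrow> m' a = m1 a" by blast
      have "run prog (55, m) (13 + T) (68, m')" using run_trans[OF m1(1) IH(5)] .
      moreover have "13 + T \<le> 13 * (Suc t - t') + 10" using IH(2,6) by simp
      moreover have "\<forall>p. t' \<le> p \<longrightarrow> p < Suc t \<longrightarrow> \<not> g p \<le> m 8"
        using IH(4) False m14 less_Suc_eq by auto
      ultimately show ?thesis using IH m14 m1(3)
        by (intro exI[of _ t'] exI[of _ m'] exI[of _ "13 + T"]) auto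
    qed
  qed
qed

lemma run_count_loop:
  assumes "m 4 = real x" "m 5 = real L" "\<forall>i. 1 \<le> i \<longrightarrow> i \<le> x \<longrightarrow> m (pcell i) = real (pr i) \<and> pr i < i"
  shows "\<exists>m' T. run prog (77, m) T (87, m') \<and> T \<le> 10 * x + 2 \<and> m' 5 = real (L + length (pred_chain pr x) - 1)
    \<and> (\<forall>a. a \<notin> {4,5,7,9} \<longrightarrow> m' a = m a)"
  using assms
proof (induction x arbitrary: m L rule: less_induct)
  case (less x)
  show ?case
  proof (cases "x = 0")
    case True
    then have "run prog (77, m) 2 (87, m(9 := 0))" "(m(9 := 0)) 5 = real (L + length (pred_chain pr x) - 1)"
      "\<forall>a. a \<notin> {4,5,7,9} \<longrightarrow> (m(9 := 0)) a = m a"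
      using run_count_stop[of m] less.prems by simp_all
    then show ?thesis by fastforce
  next
    case False
    have px: "m (pcell x) = real (pr x)" "pr x < x" using less.prems(3) False by auto
    from run_count_step[OF less.prems(1) False less.prems(2)] obtain m1 where
      m1: "run prog (77, m) 10 (77, m1)" "m1 4 = real (pr x)" "m1 5 = real (Suc L)"
      "\<forall>a. a \<notin> {4, 5, 7, 9} \<longrightarrow> m1 a = m a" using px by auto
    have pr: "\<forall>i. 1 \<le> i \<longrightarrow> i \<le> pr x \<longrightarrow> m1 (pcell i) = real (pr i) \<and> pr i < i"
      using less.prems(3) m1(4) px(2) by auto
    from less.IH[OF px(2) m1(2,3) pr] obtain m' T where
      IH: "run prog (77, m1) T (87, m')" "T \<le> 10 * pr x + 2" "m' 5 = real (Suc L + length (pred_chain pr (pr x)) - 1)"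
      "\<forall>a. a \<notin> {4, 5, 7, 9} \<longrightarrow> m' a = m1 a" by blast
    have "run prog (77, m) (10 + T) (87, m')" using run_trans[OF m1(1) IH(1)] .
    moreover have "10 + T \<le> 10 * x + 2" using IH(2) px(2) by simp
    moreover have "m' 5 = real (L + length (pred_chain pr x) - 1)" using IH(3) pred_chain_step[where x=x and pr=pr, OF False px(2)] by simp
    ultimately show ?thesis using IH m1(4) by (intro exI[of _ m'] exI[of _ "10 + T"]) auto
  qed
qed

lemma run_write_loop:
  assumes "m 4 = real x" "m 6 = real_of_int p" "p + int (length (pred_chain pr x)) = 0"
    "\<forall>i. 1 \<le> i \<longrightarrow> i \<le> x \<longrightarrow> m (pcell i) = real (pr i) \<and> pr i < i"
  shows "\<exists>m' T. run prog (90, m) T (101, m') \<and> T \<le> 11 * x + 3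
    \<and> (\<forall>k < length (pred_chain pr x). m' (p + int k) = real (pred_chain pr x ! k))
    \<and> (\<forall>a. a \<notin> {4,6,7,9} \<longrightarrow> (a < p \<or> 0 \<le> a) \<longrightarrow> m' a = m a)"
  using assms
proof (induction x arbitrary: m p rule: less_induct)
  case (less x)
  show ?case
  proof (cases "x = 0")
    case True
    then have p: "p = -1" "m 4 = 0" using less.prems by auto
    from run_write_stop[OF p(2) less.prems(2)] obtain m' where
      "run prog (90, m) 3 (101, m')" "m' p = 0" "\<forall>a. a \<notin> {9, p} \<longrightarrow> m' a = m a" by blast
    then show ?thesis using True p by (intro exI[of _ m'] exI[of _ 3]) auto
  next
    case False
    have px: "m (pcell x) = real (pr x)" "pr x < x" using less.prems(4) False by auto
    have tx: "pred_chain pr x = x # pred_chain pr (pr x)" using pred_chain_step[where x=x and pr=pr, OF False px(2)] .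
    have p0: "p < 0" using less.prems(3) tx by simp
    from run_write_step[OF less.prems(1) False less.prems(2) p0] obtain m1 where
      m1: "run prog (90, m) 11 (90, m1)" "m1 p = real x" "m1 4 = real (pr x)" "m1 6 = real_of_int (p + 1)"
      "\<forall>a. a \<notin> {4, 6, 7, 9, p} \<longrightarrow> m1 a = m a" using px by auto
    have pr: "\<forall>i. 1 \<le> i \<longrightarrow> i \<le> pr x \<longrightarrow> m1 (pcell i) = real (pr i) \<and> pr i < i"
      using less.prems(4) m1(5) px(2) p0 by auto
    have pl: "p + 1 + int (length (pred_chain pr (pr x))) = 0" using less.prems(3) tx by simp
    from less.IH[OF px(2) m1(3,4) pl pr] obtain m' T where
      IH: "run prog (90, m1) T (101, m')" "T \<le> 11 * pr x + 3"
      "\<forall>k < length (pred_chain pr (pr x)). m' (p + 1 + int k) = real (pred_chain pr (pr x) ! k)"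
      "\<forall>a. a \<notin> {4,6,7,9} \<longrightarrow> (a < p + 1 \<or> 0 \<le> a) \<longrightarrow> m' a = m1 a" by blast
    have "run prog (90, m) (11 + T) (101, m')" using run_trans[OF m1(1) IH(1)] .
    moreover have "11 + T \<le> 11 * x + 3" using IH(2) px(2) by simp
    moreover have "\<forall>k < length (pred_chain pr x). m' (p + int k) = real (pred_chain pr x ! k)"
    proof (intro allI impI)
      fix k assume k: "k < length (pred_chain pr x)"
      show "m' (p + int k) = real (pred_chain pr x ! k)"
      proof (cases k)
        case 0
        then show ?thesis using IH(4) m1(2) tx p0 by auto
      next
        case (Suc k')
        then show ?thesis using IH(3) k tx by (auto simp: algebra_simps)
      qed
    qed
    moreover have "\<forall>a. a \<notin> {4,6,7,9} \<longrightarrow> (a < p \<or> 0 \<le> a) \<longrightarrow> m' a = m a"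
      using IH(4) m1(5) p0 by auto
    ultimately show ?thesis by (intro exI[of _ m'] exI[of _ "11 + T"]) auto
  qed
qed

lemma init_mem_block:
  assumes "1 \<le> i" "i \<le> n"
  shows "init_mem n Q q dd dO dB (qcell i) = q i"
    and "init_mem n Q q dd dO dB (fcell i) = (if i < n then dd i else 0)"
    and "init_mem n Q q dd dO dB (pcell i) = dO i"
    and "init_mem n Q q dd dO dB (vcell i) = dB i"
proof -
  have "(qcell i + r - 10) div 4 = int i" "(qcell i + r - 10) mod 4 = r" if "0 \<le> r" "r \<le> 3" for r
    using that by presburger+
  from this[of 0] this[of 1] this[of 2] this[of 3] show
    "init_mem n Q q dd dO dB (qcell i) = q i"
    "init_mem n Q q dd dO dB (fcell i) = (if i < n then dd i else 0)"
    "init_mem n Q q dd dO dB (pcell i) = dO i"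
    "init_mem n Q q dd dO dB (vcell i) = dB i"
    using assms by (auto simp: init_mem_def Let_def add.assoc)
qed

lemma init_mem_registers: "init_mem n Q q dd dO dB 0 = real n" "init_mem n Q q dd dO dB 1 = Q"
  by (simp_all add: init_mem_def)

lemma init_mem_low: "a < 14 \<Longrightarrow> a \<noteq> 0 \<Longrightarrow> a \<noteq> 1 \<Longrightarrow> init_mem n Q q dd dO dB a = 0"
  by (simp add: init_mem_def)

lemma block_cells_distinct [simp]:
  "qcell a \<noteq> fcell b" "qcell a \<noteq> pcell b" "qcell a \<noteq> vcell b"
  "fcell a \<noteq> qcell b" "fcell a \<noteq> pcell b" "fcell a \<noteq> vcell b"
  "pcell a \<noteq> qcell b" "pcell a \<noteq> fcell b" "pcell a \<noteq> vcell b"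
  "vcell a \<noteq> qcell b" "vcell a \<noteq> fcell b" "vcell a \<noteq> pcell b"
  by presburger+

lemma run_output_phase:
  assumes m0: "m 0 = real n"
    and pred: "\<forall>i. 1 \<le> i \<longrightarrow> i \<le> n \<longrightarrow> m (pcell i) = real (pr i) \<and> pr i < i"
  shows "\<exists>T m'. run prog (75, m) T (103, m') \<and> T \<le> 21 * n + 12 \<and> m' 2 = m 8 \<and>
    m' 3 = real (length (pred_chain pr n)) \<and>
    (\<forall>k < length (pred_chain pr n). m' (- (int k + 1)) = real (rev (pred_chain pr n) ! k))"
proof -
  define L where "L = length (pred_chain pr n)"
  have L1: "L \<ge> 1" unfolding L_def by (simp add: Suc_le_eq)
  define m1 where "m1 = m(5 := 1, 4 := m 0)"
  have m1: "m1 4 = real n" "m1 5 = real (1::nat)"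
    "\<forall>i. 1 \<le> i \<longrightarrow> i \<le> n \<longrightarrow> m1 (pcell i) = real (pr i) \<and> pr i < i"
    using m0 pred unfolding m1_def by auto
  obtain m2 T1 where count: "run prog (77, m1) T1 (87, m2)" "T1 \<le> 10 * n + 2"
    "m2 5 = real L" "\<forall>a. a \<notin> {4,5,7,9} \<longrightarrow> m2 a = m1 a"
    using run_count_loop[OF m1] unfolding L_def by auto
  define m3 where "m3 = m2(4 := m2 0, 9 := 0, 6 := - m2 5)"
  have m3: "m3 4 = real n" "m3 6 = real_of_int (- int L)" "- int L + int (length (pred_chain pr n)) = 0"
    "\<forall>i. 1 \<le> i \<longrightarrow> i \<le> n \<longrightarrow> m3 (pcell i) = real (pr i) \<and> pr i < i"
    using count(3,4) m1(3) m0 unfolding m3_def m1_def L_def by auto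
  obtain m4 T2 where chain: "run prog (90, m3) T2 (101, m4)" "T2 \<le> 11 * n + 3"
    "\<forall>k < L. m4 (- int L + int k) = real (pred_chain pr n ! k)"
    "\<forall>a. a \<notin> {4,6,7,9} \<longrightarrow> (a < - int L \<or> 0 \<le> a) \<longrightarrow> m4 a = m3 a"
    using run_write_loop[OF m3] unfolding L_def by blast
  have "run prog (75, m) (2 + T1 + 3 + T2 + 2) (103, m4(2 := m4 8, 3 := m4 5))"
    using run_trans[OF run_trans[OF run_trans[OF run_trans[OF run_count_init[of m, folded m1_def]
          count(1)] run_write_init[of m2, folded m3_def]] chain(1)] run_output] .
  moreover have "m4 8 = m 8" "m4 5 = real L"
    using chain(4) count(3,4) L1 unfolding m3_def m1_def by auto
  moreover have "m4 (- (int k + 1)) = real (rev (pred_chain pr n) ! k)" if "k < L" for k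
    using chain(3)[rule_format, of "L - Suc k"] that
    by (simp add: L_def rev_nth of_nat_diff algebra_simps)
  ultimately show ?thesis
    using count(2) chain(2) unfolding L_def by (intro exI) auto
qed

section \<open>Correctness and running time\<close>

locale split_instance =
  fixes n :: nat and Q :: real and q dd dO dB :: "nat \<Rightarrow> real"
  assumes n_pos: "1 \<le> n" and demand_bounds: "\<forall>i\<in>{1..n}. 0 \<le> q i \<and> q i \<le> Q"
begin

abbreviation "mem0 \<equiv> init_mem n Q q dd dO dB"
abbreviation "arc \<equiv> split_arc n Q q"
abbreviation "cost \<equiv> arc_cost dd dO dB"

lemma Qpre_mono: "i \<le> k \<Longrightarrow> k \<le> n \<Longrightarrow> Qpre q i \<le> Qpre q k"
proof (induction k)
  case (Suc k)
  then show ?case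
    using demand_bounds by (cases "i = Suc k") (auto simp: Qpre_Suc intro: add_increasing2)
qed simp

lemma arc_less: "arc i j \<Longrightarrow> i < j"
  by (simp add: split_arc_def)

lemma arc_last: "1 \<le> j \<Longrightarrow> j \<le> n \<Longrightarrow> arc (j - 1) j"
  using demand_bounds Qpre_Suc[where i = "j - 1"] by (simp add: split_arc_def)

lemma arc_shift_source: "arc i j \<Longrightarrow> i \<le> k \<Longrightarrow> k < j \<Longrightarrow> arc k j"
  using Qpre_mono[of i k] by (simp add: split_arc_def)

lemma arc_shift_target: "arc i (Suc j) \<Longrightarrow> i < j \<Longrightarrow> arc i j"
  using Qpre_mono[of j "Suc j"] by (simp add: split_arc_def)

fun pot :: "nat \<Rightarrow> real" where
  "pot j = (if j = 0 then 0 else Min (set (map (\<lambda>i. pot i + cost i j) (filter (\<lambda>i. arc i j) [0..<j]))))"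

declare pot.simps [simp del]

lemma pot_0 [simp]: "pot 0 = 0"
  by (simp add: pot.simps)

lemma pot_Min: "0 < j \<Longrightarrow> pot j = Min ((\<lambda>i. pot i + cost i j) ` {i. arc i j})"
proof -
  assume "0 < j"
  moreover have "set (filter (\<lambda>i. arc i j) [0..<j]) = {i. arc i j}"
    by (auto dest: arc_less)
  ultimately show ?thesis
    by (subst pot.simps) (simp del: set_filter)
qed

lemma pot_le: "arc i j \<Longrightarrow> pot j \<le> pot i + cost i j"
  using arc_less[of i j] by (auto simp: pot_Min intro: Min_le finite_subset[of _ "{..<j}"] dest: arc_less)

lemma pot_eqI:
  assumes "arc p j" "\<And>i. arc i j \<Longrightarrow> pot p + cost p j \<le> pot i + cost i j"
  shows "pot j = pot p + cost p j"
  using assms arc_less[OF assms(1)]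
  by (auto simp: pot_Min intro!: Min_eqI finite_subset[of _ "{..<j}"] dest: arc_less)

definition restart :: "nat \<Rightarrow> real" where
  "restart i = pot i + dO (Suc i) - Dpre dd (Suc i)"

lemma pot_plus_cost: "pot i + cost i j = restart i + (Dpre dd j + dB j)"
  by (simp add: restart_def arc_cost_def)

lemma front_window:
  assumes sorted: "deque_sorted restart e h t"
    and dom: "deque_dominates restart e h t {i. arc i j}"
    and below: "\<And>p. h \<le> p \<Longrightarrow> p < t \<Longrightarrow> e p < j"
    and h': "h \<le> h'" "arc (e h') j"
    and popped: "\<And>p. h \<le> p \<Longrightarrow> p < h' \<Longrightarrow> \<not> arc (e p) j"
  shows "deque_dominates restart e h' t {i. arc i j}" and "pot j = pot (e h') + cost (e h') j"
proof -
  show dom': "deque_dominates restart e h' t {i. arc i j}"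
    by (rule deque_dominates_drop_front[where W = "\<lambda>x. arc x j", OF dom popped])
      (auto intro: arc_shift_source below)
  have "restart (e h') \<le> restart i" if "arc i j" for i
    using deque_head_le[OF deque_sorted_drop_front[OF sorted h'(1)] dom'] that by simp
  then show "pot j = pot (e h') + cost (e h') j"
    using h'(2) by (intro pot_eqI) (simp_all add: pot_plus_cost)
qed

definition stores_pred :: "(int \<Rightarrow> real) \<Rightarrow> nat \<Rightarrow> bool" where
  "stores_pred m i \<longleftrightarrow> (\<exists>p. m (pcell i) = real p \<and> p < i \<and> arc p i \<and> pot i = pot p + cost p i)"

definition processed :: "(int \<Rightarrow> real) \<Rightarrow> nat \<Rightarrow> bool" where
  "processed m k \<longleftrightarrow> (\<forall>i<k. m (qcell i) = Qpre q i \<and> m (fcell i) = restart i \<and> m (vcell i) = pot i \<and>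
     (0 < i \<longrightarrow> stores_pred m i))"

definition deque_stored :: "(int \<Rightarrow> real) \<Rightarrow> (nat \<Rightarrow> nat) \<Rightarrow> nat \<Rightarrow> nat \<Rightarrow> nat \<Rightarrow> bool" where
  "deque_stored m e h t j \<longleftrightarrow> (\<forall>p. h \<le> p \<longrightarrow> p < t \<longrightarrow> m (slot p) = real (e p) \<and> e p < j)"

lemma processed_Suc:
  "processed m (Suc k) \<longleftrightarrow> processed m k \<and> m (qcell k) = Qpre q k \<and> m (fcell k) = restart k \<and>
     m (vcell k) = pot k \<and> (0 < k \<longrightarrow> stores_pred m k)"
  by (auto simp: processed_def less_Suc_eq)

lemma processed_frame:
  assumes "processed m k" "\<And>a. 10 \<le> a \<Longrightarrow> a < qcell k \<Longrightarrow> m' a = m a"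
  shows "processed m' k"
  using assms unfolding processed_def stores_pred_def by auto

lemma deque_stored_frame:
  assumes "deque_stored m e h t j" "h \<le> h'" "t' \<le> t" "\<And>a. a < 0 \<Longrightarrow> m' a = m a"
  shows "deque_stored m' e h' t' j"
  using assms unfolding deque_stored_def by auto

text \<open>loop_inv holds at pc 3 before customer j is handled, label_inv at pc 43 (or 75 if j = n)
  once pot j and a predecessor of j have been stored.\<close>

definition loop_inv :: "nat \<Rightarrow> nat \<Rightarrow> nat \<Rightarrow> (nat \<Rightarrow> nat) \<Rightarrow> (int \<Rightarrow> real) \<Rightarrow> bool" where
  "loop_inv j h t e m \<longleftrightarrow> 1 \<le> j \<and> j \<le> n \<and> h < t \<and> t \<le> j \<and> e (t - 1) = j - 1 \<and>
     m 0 = real n \<and> m 1 = Q \<and> m 2 = real j \<and> m 3 = Dpre dd j \<and> m 4 = real h \<and> m 5 = real t \<and>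
     m 6 = Qpre q (j - 1) \<and> (\<forall>a. qcell j \<le> a \<longrightarrow> m a = mem0 a) \<and> processed m j \<and>
     deque_stored m e h t j \<and> deque_sorted restart e h t \<and> deque_dominates restart e h t {i. arc i j}"

definition label_inv :: "nat \<Rightarrow> nat \<Rightarrow> nat \<Rightarrow> (nat \<Rightarrow> nat) \<Rightarrow> (int \<Rightarrow> real) \<Rightarrow> bool" where
  "label_inv j h t e m \<longleftrightarrow> 1 \<le> j \<and> j \<le> n \<and> h < t \<and> t \<le> j \<and>
     m 0 = real n \<and> m 1 = Q \<and> m 2 = real j \<and> m 3 = Dpre dd j \<and> m 4 = real h \<and> m 5 = real t \<and>
     m 6 = Qpre q j \<and> m 7 = 4 * real j + 10 \<and> m 8 = pot j \<and>
     m (fcell j) = mem0 (fcell j) \<and> (\<forall>a. qcell (Suc j) \<le> a \<longrightarrow> m a = mem0 a) \<and> processed m j \<and>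
     m (qcell j) = Qpre q j \<and> m (vcell j) = pot j \<and> stores_pred m j \<and>
     deque_stored m e h t j \<and> deque_sorted restart e h t \<and> deque_dominates restart e h t {i. arc i j}"

lemma run_pop_front:
  assumes inv: "loop_inv j h t e m"
  shows "\<exists>h' m'. h \<le> h' \<and> h' < t \<and> arc (e h') j \<and> (\<forall>p. h \<le> p \<longrightarrow> p < h' \<longrightarrow> \<not> arc (e p) j) \<and>
    run prog (3, m) (13 * (h' - h) + 17) (23, m') \<and> m' 4 = real h' \<and> m' 6 = Qpre q j \<and>
    m' 7 = 4 * real j + 10 \<and> m' (qcell j) = Qpre q j \<and> (\<forall>a. a \<notin> {4,6,7,8,9,qcell j} \<longrightarrow> m' a = m a)"
proof -
  have j: "1 \<le> j" "j \<le> n" and ht: "h < t" "t \<le> j" and last: "e (t - 1) = j - 1"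
    and regs: "m 1 = Q" "m 2 = real j" "m 4 = real h" "m 6 = Qpre q (j - 1)"
    and input: "\<forall>a. qcell j \<le> a \<longrightarrow> m a = mem0 a" and proc: "processed m j"
    and stored: "deque_stored m e h t j"
    using inv unfolding loop_inv_def by blast+
  have below: "e p < j" "m (slot p) = real (e p)" if "h \<le> p" "p < t" for p
    using stored that unfolding deque_stored_def by auto
  have "Qpre q (j - 1) + q j = Qpre q j" using j Qpre_Suc[where i = "j - 1"] by simp
  then obtain m1 where m1: "run prog (3, m) 7 (10, m1)" "m1 6 = Qpre q j" "m1 (qcell j) = Qpre q j"
    "m1 7 = 4 * real j + 10" "\<forall>a. a \<notin> {6,7,8,qcell j} \<longrightarrow> m1 a = m a"
    using run_load_prefix[OF regs(2,4)] input init_mem_block(1)[OF j] by auto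
  have fits: "m1 6 - m1 (qcell (e p)) \<le> m1 1 \<longleftrightarrow> arc (e p) j" if "h \<le> p" "p < t" for p
    using below[OF that] proc m1(2,5) regs(1) j unfolding processed_def split_arc_def by auto
  have exit: "\<exists>p. h \<le> p \<and> p < t \<and> m1 6 - m1 (qcell (e p)) \<le> m1 1"
    using fits[of "t - 1"] ht last arc_last[OF j] by (intro exI[of _ "t - 1"]) auto
  have slots: "\<forall>p. h \<le> p \<longrightarrow> p < t \<longrightarrow> m1 (slot p) = real (e p) \<and> m1 (qcell (e p)) = m1 (qcell (e p))"
    using below m1(5) by auto
  have "m1 4 = real h" using m1(5) regs(3) by auto
  then obtain h' m2 where h': "h \<le> h'" "h' < t" "m1 6 - m1 (qcell (e h')) \<le> m1 1"
    and popped: "\<forall>p. h \<le> p \<longrightarrow> p < h' \<longrightarrow> \<not> m1 6 - m1 (qcell (e p)) \<le> m1 1"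
    and m2: "run prog (10, m1) (13 * (h' - h) + 10) (23, m2)" "m2 4 = real h'"
      "\<forall>a. a \<notin> {4,8,9} \<longrightarrow> m2 a = m1 a"
    using run_front_loop[of m1 h t e "\<lambda>p. m1 (qcell (e p))", OF _ ht(1) slots exit] by blast
  have "run prog (3, m) (13 * (h' - h) + 17) (23, m2)"
    using run_trans[OF m1(1) m2(1)] by (simp add: algebra_simps)
  then show ?thesis
    using h' popped fits m1(2-5) m2(2,3) by (intro exI[of _ h'] exI[of _ m2]) auto
qed

lemma run_front_phase:
  assumes inv: "loop_inv j h t e m"
  shows "\<exists>h' m'. h \<le> h' \<and> h' < t \<and>
    run prog (3, m) (37 + 13 * (h' - h)) (if n \<le> j then 75 else 43, m') \<and> label_inv j h' t e m'"
proof -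
  have j: "1 \<le> j" "j \<le> n" and ht: "t \<le> j"
    and regs: "m 0 = real n" "m 1 = Q" "m 2 = real j" "m 3 = Dpre dd j" "m 5 = real t"
    and input: "\<forall>a. qcell j \<le> a \<longrightarrow> m a = mem0 a" and proc: "processed m j"
    and stored: "deque_stored m e h t j" and sorted: "deque_sorted restart e h t"
    and dom: "deque_dominates restart e h t {i. arc i j}"
    using inv unfolding loop_inv_def by blast+
  have below: "e p < j" "m (slot p) = real (e p)" if "h \<le> p" "p < t" for p
    using stored that unfolding deque_stored_def by auto
  obtain h' m2 where h': "h \<le> h'" "h' < t" "arc (e h') j"
    and dropped: "\<forall>p. h \<le> p \<longrightarrow> p < h' \<longrightarrow> \<not> arc (e p) j"
    and m2: "run prog (3, m) (13 * (h' - h) + 17) (23, m2)" "m2 4 = real h'" "m2 6 = Qpre q j"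
      "m2 7 = 4 * real j + 10" "m2 (qcell j) = Qpre q j" "\<forall>a. a \<notin> {4,6,7,8,9,qcell j} \<longrightarrow> m2 a = m a"
    using run_pop_front[OF inv] by blast
  have dom': "deque_dominates restart e h' t {i. arc i j}" and pot_j: "pot j = pot (e h') + cost (e h') j"
    using front_window[OF sorted dom below(1) h'(1,3)] dropped by auto
  have "e h' < j" using below h' by auto
  then have "m2 (slot h') = real (e h')" "m2 (fcell (e h')) = restart (e h')" "m2 (vcell j) = dB j"
    "m2 3 = Dpre dd j" "m2 2 = real j" "m2 0 = real n"
    using below[OF h'(1,2)] m2(6) proc input init_mem_block(4)[OF j] regs
    unfolding processed_def by auto
  moreover have "restart (e h') + dB j + Dpre dd j = pot j" using pot_j by (simp add: pot_plus_cost)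
  ultimately obtain m3 where m3: "run prog (23, m2) 20 (if n \<le> j then 75 else 43, m3)"
    "m3 8 = pot j" "m3 (pcell j) = real (e h')" "m3 (vcell j) = pot j"
    "\<forall>a. a \<notin> {8,9,pcell j,vcell j} \<longrightarrow> m3 a = m2 a"
    using run_set_label[of m2, OF m2(2)] m2(4) by metis
  have frame: "\<forall>a. a \<notin> {4,6,7,8,9,qcell j,pcell j,vcell j} \<longrightarrow> m3 a = m a"
    using m2(6) m3(5) by auto
  have "run prog (3, m) (37 + 13 * (h' - h)) (if n \<le> j then 75 else 43, m3)"
    using run_trans[OF m2(1) m3(1)] by (simp add: algebra_simps)
  moreover have "label_inv j h' t e m3"
  proof -
    have "m3 0 = real n" "m3 1 = Q" "m3 2 = real j" "m3 3 = Dpre dd j" "m3 4 = real h'" "m3 5 = real t"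
      "m3 6 = Qpre q j" "m3 7 = 4 * real j + 10" "m3 (qcell j) = Qpre q j"
      using m2(2-6) m3(5) regs by simp_all
    moreover have "m3 (fcell j) = mem0 (fcell j)" "\<forall>a. qcell (Suc j) \<le> a \<longrightarrow> m3 a = mem0 a"
      using frame input by auto
    moreover have "processed m3 j" using processed_frame[OF proc] frame by simp
    moreover have "deque_stored m3 e h' t j" using deque_stored_frame[OF stored h'(1) order_refl] frame by simp
    moreover have "stores_pred m3 j" using m3(3) pot_j h'(3) \<open>e h' < j\<close> unfolding stores_pred_def by auto
    ultimately show ?thesis
      using j h'(2) ht m3(2,4) dom' deque_sorted_drop_front[OF sorted h'(1)] unfolding label_inv_def by blast
  qed
  ultimately show ?thesis using h' by blast
qed

lemma run_pop_back:
  assumes inv: "label_inv j h t e m" and jn: "j < n"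
  shows "\<exists>t' m' T. h \<le> t' \<and> t' \<le> t \<and> (t' = h \<or> restart (e (t' - 1)) \<le> restart j) \<and>
    (\<forall>p. t' \<le> p \<longrightarrow> p < t \<longrightarrow> restart j < restart (e p)) \<and>
    run prog (43, m) T (68, m') \<and> T \<le> 13 * (t - t') + 22 \<and> m' 3 = Dpre dd (Suc j) \<and> m' 5 = real t' \<and>
    m' (fcell j) = restart j \<and> (\<forall>a. a \<notin> {3,5,7,8,9,fcell j} \<longrightarrow> m' a = m a)"
proof -
  have j: "1 \<le> j" and ht: "h < t"
    and regs: "m 3 = Dpre dd j" "m 4 = real h" "m 5 = real t" "m 7 = 4 * real j + 10" "m 8 = pot j"
    and fcell_j: "m (fcell j) = mem0 (fcell j)" and input: "\<forall>a. qcell (Suc j) \<le> a \<longrightarrow> m a = mem0 a"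
    and proc: "processed m j" and stored: "deque_stored m e h t j"
    using inv unfolding label_inv_def by blast+
  have "m (fcell j) = dd j" "m (pcell (Suc j)) = dO (Suc j)"
    using fcell_j input init_mem_block(2)[OF j] init_mem_block(3)[of "Suc j"] jn by auto
  moreover have "pot j + dO (Suc j) - (Dpre dd j + dd j) = restart j" "Dpre dd j + dd j = Dpre dd (Suc j)"
    using Dpre_Suc[OF j] by (simp_all add: restart_def)
  ultimately obtain m4 where m4: "run prog (43, m) 12 (55, m4)" "m4 3 = Dpre dd (Suc j)" "m4 8 = restart j"
    "m4 (fcell j) = restart j" "\<forall>a. a \<notin> {3,8,9,fcell j} \<longrightarrow> m4 a = m a"
    using run_set_restart[of m, OF regs(4) _ _ regs(1,5)] by metis
  have slots: "\<forall>p. h \<le> p \<longrightarrow> p < t \<longrightarrow> m4 (slot p) = real (e p) \<and> m4 (fcell (e p)) = restart (e p)"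
  proof (intro allI impI)
    fix p assume "h \<le> p" "p < t"
    then have "m (slot p) = real (e p)" "e p < j" "fcell (e p) \<noteq> fcell j"
      using stored unfolding deque_stored_def by auto
    then show "m4 (slot p) = real (e p) \<and> m4 (fcell (e p)) = restart (e p)"
      using m4(5) proc unfolding processed_def by auto
  qed
  have "m4 4 = real h" "m4 5 = real t" using m4(5) regs(2,3) by auto
  then obtain t' m5 T5 where t': "h \<le> t'" "t' \<le> t" "t' = h \<or> restart (e (t' - 1)) \<le> m4 8"
    and dropped: "\<forall>p. t' \<le> p \<longrightarrow> p < t \<longrightarrow> \<not> restart (e p) \<le> m4 8"
    and m5: "run prog (55, m4) T5 (68, m5)" "T5 \<le> 13 * (t - t') + 10" "m5 5 = real t'"
      "\<forall>a. a \<notin> {5,7,9} \<longrightarrow> m5 a = m4 a"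
    using run_back_loop[of m4 h t e "\<lambda>p. restart (e p)", OF _ _ less_imp_le[OF ht] slots] by blast
  have "run prog (43, m) (12 + T5) (68, m5)" using run_trans[OF m4(1) m5(1)] .
  then show ?thesis
    using t' dropped m4(2-5) m5(2-4) unfolding m4(3) not_le
    by (intro exI[of _ t'] exI[of _ m5] exI[of _ "12 + T5"]) auto
qed

lemma run_back_phase:
  assumes inv: "label_inv j h t e m" and jn: "j < n"
  shows "\<exists>T t' m'. h \<le> t' \<and> t' \<le> t \<and> run prog (43, m) T (3, m') \<and> T \<le> 13 * (t - t') + 29 \<and>
    loop_inv (Suc j) h (Suc t') (e(t' := j)) m'"
proof -
  have j: "1 \<le> j" and ht: "h < t" "t \<le> j"
    and regs: "m 0 = real n" "m 1 = Q" "m 2 = real j" "m 4 = real h" "m 6 = Qpre q j"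
    and input: "\<forall>a. qcell (Suc j) \<le> a \<longrightarrow> m a = mem0 a"
    and proc: "processed m j" and cells_j: "m (qcell j) = Qpre q j" "m (vcell j) = pot j" "stores_pred m j"
    and stored: "deque_stored m e h t j" and sorted: "deque_sorted restart e h t"
    and dom: "deque_dominates restart e h t {i. arc i j}"
    using inv unfolding label_inv_def by blast+
  have below: "e p < j" "m (slot p) = real (e p)" if "h \<le> p" "p < t" for p
    using stored that unfolding deque_stored_def by auto
  obtain t' m5 T5 where t': "h \<le> t'" "t' \<le> t" "t' = h \<or> restart (e (t' - 1)) \<le> restart j"
    and dropped: "\<forall>p. t' \<le> p \<longrightarrow> p < t \<longrightarrow> restart j < restart (e p)"
    and m5: "run prog (43, m) T5 (68, m5)" "T5 \<le> 13 * (t - t') + 22" "m5 3 = Dpre dd (Suc j)"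
      "m5 5 = real t'" "m5 (fcell j) = restart j" "\<forall>a. a \<notin> {3,5,7,8,9,fcell j} \<longrightarrow> m5 a = m a"
    using run_pop_back[OF inv jn] by blast
  obtain m6 where m6: "run prog (68, m5) 7 (3, m6)" "m6 5 = real (Suc t')" "m6 2 = real (Suc j)"
    "m6 (slot t') = real j" "\<forall>a. a \<notin> {2,5,9,slot t'} \<longrightarrow> m6 a = m5 a"
    using run_push[of m5, OF m5(4)] m5(6) regs(3) by auto
  have frame: "\<forall>a. a \<notin> {2,3,5,7,8,9,fcell j,slot t'} \<longrightarrow> m6 a = m a"
    using m5(6) m6(5) by auto
  have "run prog (43, m) (T5 + 7) (3, m6)" using run_trans[OF m5(1) m6(1)] .
  moreover have "loop_inv (Suc j) h (Suc t') (e(t' := j)) m6"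
  proof -
    have "m6 0 = real n" "m6 1 = Q" "m6 3 = Dpre dd (Suc j)" "m6 4 = real h" "m6 6 = Qpre q (Suc j - 1)"
      using m5(3,6) m6(5) regs by simp_all
    moreover have "\<forall>a. qcell (Suc j) \<le> a \<longrightarrow> m6 a = mem0 a" using frame input by auto
    moreover have "processed m6 (Suc j)"
      using processed_frame[OF proc] frame cells_j m5(5) m6(5)
      unfolding processed_Suc stores_pred_def by auto
    moreover have "deque_stored m6 (e(t' := j)) h (Suc t') (Suc j)"
      using below frame m6(4) t'(2) unfolding deque_stored_def by (auto simp: less_Suc_eq)
    moreover have "deque_sorted restart (e(t' := j)) h (Suc t')"
      using deque_sorted_push_back[OF sorted t'(2,3)] below(1) by blast
    moreover have "deque_dominates restart (e(t' := j)) h (Suc t') (insert j {i. arc i j})"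
      using deque_dominates_push_back[OF dom t'(1)] dropped below(1) by blast
    then have "deque_dominates restart (e(t' := j)) h (Suc t') {i. arc i (Suc j)}"
      by (rule deque_dominates_subset) (metis arc_less arc_shift_target insertCI less_SucE
        mem_Collect_eq subsetI)
    ultimately show ?thesis
      using j jn ht t' m6(2,3) unfolding loop_inv_def by auto
  qed
  ultimately show ?thesis
    using t'(1,2) m5(2) by (intro exI[of _ "T5 + 7"] exI[of _ t'] exI[of _ m6]) auto
qed

definition post :: "(int \<Rightarrow> real) \<Rightarrow> bool" where
  "post m \<longleftrightarrow> m 0 = real n \<and> m 8 = pot n \<and> (\<forall>i. 1 \<le> i \<longrightarrow> i \<le> n \<longrightarrow> stores_pred m i)"

lemma post_if_label_inv: "label_inv n h t e m \<Longrightarrow> post m"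
  unfolding label_inv_def post_def processed_def by (metis le_neq_implies_less less_le_trans zero_less_one)

lemma loop_inv_init: "loop_inv 1 0 1 (\<lambda>_. 0) (mem0(11 := mem0 16, 5 := 1, 2 := 1))"
proof -
  have "mem0 16 = restart 0"
    using init_mem_block(3)[of 1 n] n_pos by (simp add: restart_def Dpre_def)
  moreover have "deque_dominates restart (\<lambda>_. 0) 0 1 {i. arc i 1}"
    by (auto simp: deque_dominates_def dest: arc_less)
  ultimately show ?thesis
    using n_pos
    by (simp add: loop_inv_def processed_def deque_stored_def deque_sorted_def init_mem_low init_mem_registers
      Dpre_def)
qed

lemma run_main_loop:
  "loop_inv j h t e m \<Longrightarrow>
    \<exists>T m'. run prog (3, m) T (75, m') \<and> T \<le> 80 * (n - j) + 13 * (t - h) + 37 \<and> post m'"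
proof (induction "n - j" arbitrary: j h t e m rule: less_induct)
  case less
  obtain h' m1 where front: "h \<le> h'" "h' < t"
    "run prog (3, m) (37 + 13 * (h' - h)) (if n \<le> j then 75 else 43, m1)" "label_inv j h' t e m1"
    using run_front_phase[OF less.prems] by blast
  show ?case
  proof (cases "j < n")
    case False
    then have "j = n" using less.prems by (simp add: loop_inv_def)
    then show ?thesis using front post_if_label_inv by fastforce
  next
    case True
    obtain T2 t' m2 where tail: "h' \<le> t'" "t' \<le> t" "run prog (43, m1) T2 (3, m2)"
      "T2 \<le> 13 * (t - t') + 29" "loop_inv (Suc j) h' (Suc t') (e(t' := j)) m2"
      using run_back_phase[OF front(4) True] by blast
    obtain T3 m3 where rest: "run prog (3, m2) T3 (75, m3)"
      "T3 \<le> 80 * (n - Suc j) + 13 * (Suc t' - h') + 37" "post m3"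
      using less.hyps[OF _ tail(5)] True by (meson diff_less_mono2 lessI)
    have "run prog (3, m) (37 + 13 * (h' - h)) (43, m1)" using front(3) True by simp
    then have "run prog (3, m) (37 + 13 * (h' - h) + T2 + T3) (75, m3)"
      using run_trans[OF run_trans[OF _ tail(3)] rest(1)] by blast
    moreover have "37 + 13 * (h' - h) + T2 + T3 \<le> 80 * (n - j) + 13 * (t - h) + 37"
      using front(1) tail(1,2,4) rest(2) True by simp
    ultimately show ?thesis using rest(3) by blast
  qed
qed

lemma run_output:
  assumes "post m"
  shows "\<exists>T m'. run prog (75, m) T (103, m') \<and> T \<le> 21 * n + 12 \<and> output_ok n Q q dd dO dB m'"
proof -
  have "\<forall>i. \<exists>p. 1 \<le> i \<longrightarrow> i \<le> n \<longrightarrow> m (pcell i) = real p \<and> p < i \<and> arc p i \<and> pot i = pot p + cost p i"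
    using assms unfolding post_def stores_pred_def by blast
  then obtain pr where pr: "\<And>i. 1 \<le> i \<Longrightarrow> i \<le> n \<Longrightarrow>
      m (pcell i) = real (pr i) \<and> pr i < i \<and> arc (pr i) i \<and> pot i = pot (pr i) + cost (pr i) i"
    by metis
  obtain T m' where out: "run prog (75, m) T (103, m')" "T \<le> 21 * n + 12" "m' 2 = m 8"
    "m' 3 = real (length (pred_chain pr n))"
    "\<forall>k < length (pred_chain pr n). m' (- (int k + 1)) = real (rev (pred_chain pr n) ! k)"
    using run_output_phase[of m n pr] assms pr unfolding post_def by auto
  have "min_split_path n Q q dd dO dB (rev (pred_chain pr n)) \<and>
      path_cost dd dO dB (rev (pred_chain pr n)) = pot n"
    using min_split_path_pred_chain[of pot n pr Q q dd dO dB] pr pot_le by auto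
  then have "output_ok n Q q dd dO dB m'"
    using out(3-5) assms unfolding output_ok_def post_def by (intro exI[of _ "rev (pred_chain pr n)"]) auto
  with out(1,2) show ?thesis by blast
qed

lemma run_split: "\<exists>t m'. t \<le> 101 * n \<and> runs_in prog mem0 t m' \<and> output_ok n Q q dd dO dB m'"
proof -
  obtain T1 m1 where loop: "run prog (3, mem0(11 := mem0 16, 5 := 1, 2 := 1)) T1 (75, m1)"
    "T1 \<le> 80 * (n - 1) + 50" "post m1"
    using run_main_loop[OF loop_inv_init] by auto
  obtain T2 m2 where out: "run prog (75, m1) T2 (103, m2)" "T2 \<le> 21 * n + 12" "output_ok n Q q dd dO dB m2"
    using run_output[OF loop(3)] by blast
  have "runs_in prog mem0 (3 + T1 + T2) m2"
    using run_trans[OF run_trans[OF run_init loop(1)] out(1)]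
    by (rule runs_in_if_run) (simp add: halted_def length_prog prog_nth)
  moreover have "3 + T1 + T2 \<le> 101 * n" using loop(2) out(2) n_pos by simp
  ultimately show ?thesis using out(3) by blast
qed

end

theorem mainTheorem2:
  shows "\<exists>(P :: instr list) (C :: nat). \<forall>(n :: nat) (Q :: real) q dd dO dB.
     n \<ge> 1 \<longrightarrow> Q \<ge> 0 \<longrightarrow> (\<forall>i \<in> {1..n}. 0 \<le> q i \<and> q i \<le> Q) \<longrightarrow>
     (\<exists>t m'. t \<le> C * n \<and> runs_in P (init_mem n Q q dd dO dB) t m' \<and>
             output_ok n Q q dd dO dB m')"
proof (rule exI[of _ prog], rule exI[of _ 101], intro allI impI)
  fix n :: nat and Q :: real and q dd dO dB :: "nat \<Rightarrow> real"
  assume "n \<ge> 1" "Q \<ge> 0" "\<forall>i \<in> {1..n}. 0 \<le> q i \<and> q i \<le> Q"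
  then interpret split_instance n Q q dd dO dB by unfold_locales auto
  show "\<exists>t m'. t \<le> 101 * n \<and> runs_in prog (init_mem n Q q dd dO dB) t m' \<and> output_ok n Q q dd dO dB m'"
    by (rule run_split)
qed

end
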